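(* Let $R$, $G$, $*$, $\sigma$ and $\mathcal{S}$ be as in the context, and suppose $\mathcal{S}$ is anticommutative. Let $x,y\in G\setminus G_*$ with $\sigma(y)\neq -1$. Then at least one of the following holds: - $x^y\in\{x,x^*\}$; - $\sigma(xy)=-1$, $xy=x^*y^*$ and $xy^*=x^*y$.
   Context: Throughout, $R$ is a commutative ring with unity with $\operatorname{char}(R)\neq 2$, and $\mathcal{U}(R)$ is its unit group. $G$ is a group with an involution $*$, i.e. a map $x\mapsto x^*$ with $(xy)^*=y^*x^*$ and $(x^* )^*=x$. The map $\sigma:G\to\mathcal{U}(R)$ is a nontrivial group homomorphism with kernel $N=\ker\sigma$, and it is compatible with $*$: $xx^*\in N$ for all $x\in G$. The group ring $RG$ carries the involution $\left(\sum_{x\in G}\alpha_x x\right)^{\sigma*}=\sum_{x\in G}\sigma(x)\alpha_x x^*$. Write $G_*=\{x\in G: x^*=x\}$ and $N_*=G_*\cap N$. Let $\mathcal{S}$ be the $R$-submodule of $RG$ spanned by the union of the following three sets: - $2\mathcal{S}_1=\{2x: x\in N_*\}$; - $\mathcal{S}_2=\{\alpha x: x\in G_*\setminus N,\ \alpha\in R,\ \alpha(1-\sigma(x))=0\}$; - $\mathcal{S}_3=\{x+\sigma(x)x^*: x\in G\setminus G_*\}$. $\mathcal{S}$ is called anticommutative if $ab+ba=0$ for all $a,b\in\mathcal{S}$. The conjugate of $x$ by $y$ is $x^y=y^{-1}xy$. *)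

theory Defs
  imports "HOL-Algebra.Group"
begin

text \<open>Group ring RG: elements are functions G -> R, zero outside carrier G,
  with finite support. Multiplication is convolution.\<close>

definition gr_supp :: "('g, 'm) monoid_scheme \<Rightarrow> ('g \<Rightarrow> 'r::comm_ring_1) \<Rightarrow> 'g set" where
  "gr_supp G a = {x \<in> carrier G. a x \<noteq> 0}"

definition gr_elem :: "('g, 'm) monoid_scheme \<Rightarrow> ('g \<Rightarrow> 'r::comm_ring_1) \<Rightarrow> bool" where
  "gr_elem G a \<longleftrightarrow> finite (gr_supp G a) \<and> (\<forall>z. z \<notin> carrier G \<longrightarrow> a z = 0)"

definition gr_mult :: "('g, 'm) monoid_scheme \<Rightarrow> ('g \<Rightarrow> 'r::comm_ring_1) \<Rightarrow> ('g \<Rightarrow> 'r) \<Rightarrow> ('g \<Rightarrow> 'r)" where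
  "gr_mult G a b = (\<lambda>z. if z \<in> carrier G
      then (\<Sum>x\<in>gr_supp G a. a x * b (inv\<^bsub>G\<^esub> x \<otimes>\<^bsub>G\<^esub> z)) else 0)"

definition gr_add :: "('g \<Rightarrow> 'r::comm_ring_1) \<Rightarrow> ('g \<Rightarrow> 'r) \<Rightarrow> ('g \<Rightarrow> 'r)" where
  "gr_add a b = (\<lambda>z. a z + b z)"

definition gr_smult :: "'r::comm_ring_1 \<Rightarrow> ('g \<Rightarrow> 'r) \<Rightarrow> ('g \<Rightarrow> 'r)" where
  "gr_smult r a = (\<lambda>z. r * a z)"

definition gr_basis :: "'g \<Rightarrow> ('g \<Rightarrow> 'r::comm_ring_1)" where
  "gr_basis x = (\<lambda>z. if z = x then 1 else 0)"

inductive_set gr_span :: "('g \<Rightarrow> 'r::comm_ring_1) set \<Rightarrow> ('g \<Rightarrow> 'r) set"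
  for A :: "('g \<Rightarrow> 'r) set" where
  zero: "(\<lambda>z. 0) \<in> gr_span A"
| step: "g \<in> A \<Longrightarrow> s \<in> gr_span A \<Longrightarrow> gr_add (gr_smult r g) s \<in> gr_span A"

definition group_involution :: "('g, 'm) monoid_scheme \<Rightarrow> ('g \<Rightarrow> 'g) \<Rightarrow> bool" where
  "group_involution G star \<longleftrightarrow>
     (\<forall>x\<in>carrier G. star x \<in> carrier G) \<and>
     (\<forall>x\<in>carrier G. \<forall>y\<in>carrier G. star (x \<otimes>\<^bsub>G\<^esub> y) = star y \<otimes>\<^bsub>G\<^esub> star x) \<and>
     (\<forall>x\<in>carrier G. star (star x) = x)"

definition unit_hom :: "('g, 'm) monoid_scheme \<Rightarrow> ('g \<Rightarrow> 'r::comm_ring_1) \<Rightarrow> bool" where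
  "unit_hom G \<sigma> \<longleftrightarrow> (\<forall>x\<in>carrier G. \<sigma> x dvd 1) \<and>
     (\<forall>x\<in>carrier G. \<forall>y\<in>carrier G. \<sigma> (x \<otimes>\<^bsub>G\<^esub> y) = \<sigma> x * \<sigma> y)"

definition sym_elems :: "('g, 'm) monoid_scheme \<Rightarrow> ('g \<Rightarrow> 'g) \<Rightarrow> 'g set" where
  "sym_elems G star = {x \<in> carrier G. star x = x}"

definition sigma_ker :: "('g, 'm) monoid_scheme \<Rightarrow> ('g \<Rightarrow> 'r::comm_ring_1) \<Rightarrow> 'g set" where
  "sigma_ker G \<sigma> = {x \<in> carrier G. \<sigma> x = 1}"

definition S_gens :: "('g, 'm) monoid_scheme \<Rightarrow> ('g \<Rightarrow> 'g) \<Rightarrow> ('g \<Rightarrow> 'r::comm_ring_1) \<Rightarrow> ('g \<Rightarrow> 'r) set" where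
  "S_gens G star \<sigma> =
     {gr_smult 2 (gr_basis x) | x. x \<in> sym_elems G star \<inter> sigma_ker G \<sigma>}
   \<union> {gr_smult \<alpha> (gr_basis x) | x \<alpha>. x \<in> sym_elems G star - sigma_ker G \<sigma> \<and> \<alpha> * (1 - \<sigma> x) = 0}
   \<union> {gr_add (gr_basis x) (gr_smult (\<sigma> x) (gr_basis (star x))) | x. x \<in> carrier G - sym_elems G star}"

definition S_set :: "('g, 'm) monoid_scheme \<Rightarrow> ('g \<Rightarrow> 'g) \<Rightarrow> ('g \<Rightarrow> 'r::comm_ring_1) \<Rightarrow> ('g \<Rightarrow> 'r) set" where
  "S_set G star \<sigma> = gr_span (S_gens G star \<sigma>)"

definition anticommutative :: "('g, 'm) monoid_scheme \<Rightarrow> ('g \<Rightarrow> 'r::comm_ring_1) set \<Rightarrow> bool" where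
  "anticommutative G S \<longleftrightarrow> (\<forall>a\<in>S. \<forall>b\<in>S. gr_add (gr_mult G a b) (gr_mult G b a) = (\<lambda>z. 0))"

end

theory Submission
  imports Defs
begin

text \<open>
  Put \<open>a = x + \<sigma>(x) x\<^sup>*\<close> and \<open>b = y + \<sigma>(y) y\<^sup>*\<close>, both generators of \<open>\<S>\<close>.
  Comparing coefficients in \<open>2a\<^sup>2 = 0\<close> shows that \<open>x\<close> commutes with \<open>x\<^sup>*\<close>, that
  \<open>x\<^sup>2 = (x\<^sup>*)\<^sup>2\<close> and that \<open>4 = 0\<close> in \<open>R\<close>. If \<open>y\<close> does not conjugate \<open>x\<close> into \<open>{x, x\<^sup>*}\<close>,
  the coefficient of \<open>xy\<close> in \<open>ab + ba = 0\<close> is \<open>1\<close> plus contributions from the coincidences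
  \<open>xy = x\<^sup>*y\<^sup>*\<close>, \<open>xy = y\<^sup>*x\<close>, \<open>xy = y\<^sup>*x\<^sup>*\<close>. The second one is excluded by \<open>\<sigma>(y) \<noteq> -1\<close>
  together with the coefficient of \<open>yx\<close>. The third one would make \<open>xy\<close> symmetric with
  \<open>\<sigma>(xy) = -1\<close>, so \<open>2xy \<in> \<S>\<close> (because \<open>4 = 0\<close>), and \<open>2xy\<close> does not anticommute with \<open>a\<close>.
  Only \<open>xy = x\<^sup>*y\<^sup>*\<close> with \<open>\<sigma>(x)\<sigma>(y) = -1\<close> remains.
\<close>

lemma two_neq_zero_of_CHAR_neq_2:
  assumes "CHAR('r::comm_ring_1) \<noteq> 2" shows "(2::'r) \<noteq> 0"
proof
  assume "(2::'r) = 0"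
  then have "CHAR('r) dvd 2"
    using of_nat_eq_0_iff_char_dvd[where 'a='r, of 2] by simp
  then have "CHAR('r) \<noteq> 0" "CHAR('r) \<le> 2"
    using dvd_imp_le[of "CHAR('r)" 2] by (metis dvd_0_left_iff zero_neq_numeral, simp)
  with assms CHAR_not_1[where 'a='r] show False
    by linarith
qed

lemma gr_elem_zero_outside_supp: "gr_elem G a \<Longrightarrow> w \<notin> gr_supp G a \<Longrightarrow> a w = 0"
  by (auto simp: gr_elem_def gr_supp_def)

lemma gr_elem_basis: "g \<in> carrier G \<Longrightarrow> gr_elem G (gr_basis g)"
  by (auto simp: gr_elem_def gr_supp_def gr_basis_def)

lemma gr_elem_add: "gr_elem G a \<Longrightarrow> gr_elem G b \<Longrightarrow> gr_elem G (gr_add a b)"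
  unfolding gr_elem_def gr_add_def
  by (auto intro: finite_subset[of _ "gr_supp G a \<union> gr_supp G b"] simp: gr_supp_def)

lemma gr_elem_smult: "gr_elem G a \<Longrightarrow> gr_elem G (gr_smult r a)"
  unfolding gr_elem_def gr_smult_def
  by (auto elim!: rev_finite_subset simp: gr_supp_def)

lemma gr_mult_eq_sum:
  assumes "finite S" "S \<subseteq> carrier G" "\<And>w. w \<notin> S \<Longrightarrow> a w = 0" "z \<in> carrier G"
  shows "gr_mult G a b z = (\<Sum>g\<in>S. a g * b (inv\<^bsub>G\<^esub> g \<otimes>\<^bsub>G\<^esub> z))"
proof -
  have "gr_supp G a \<subseteq> S" using assms(3) by (auto simp: gr_supp_def)
  then have "(\<Sum>g\<in>gr_supp G a. a g * b (inv\<^bsub>G\<^esub> g \<otimes>\<^bsub>G\<^esub> z)) = (\<Sum>g\<in>S. a g * b (inv\<^bsub>G\<^esub> g \<otimes>\<^bsub>G\<^esub> z))"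
    by (rule sum.mono_neutral_left[OF assms(1)]) (use assms(2) in \<open>auto simp: gr_supp_def\<close>)
  then show ?thesis using assms(4) by (simp add: gr_mult_def)
qed

lemma gr_mult_outside_carrier: "z \<notin> carrier G \<Longrightarrow> gr_mult G a b z = 0"
  by (simp add: gr_mult_def)

lemma gr_mult_add_left:
  assumes "gr_elem G a" "gr_elem G b"
  shows "gr_mult G (gr_add a b) c = gr_add (gr_mult G a c) (gr_mult G b c)"
proof
  fix z
  let ?S = "gr_supp G a \<union> gr_supp G b"
  have S: "finite ?S" "?S \<subseteq> carrier G"
    using assms by (auto simp: gr_elem_def gr_supp_def)
  have zero: "a w = 0" "b w = 0" if "w \<notin> ?S" for w
    using that gr_elem_zero_outside_supp[OF assms(1)] gr_elem_zero_outside_supp[OF assms(2)] by auto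
  show "gr_mult G (gr_add a b) c z = gr_add (gr_mult G a c) (gr_mult G b c) z"
  proof (cases "z \<in> carrier G")
    case True
    have "gr_mult G (gr_add a b) c z = (\<Sum>g\<in>?S. (a g + b g) * c (inv\<^bsub>G\<^esub> g \<otimes>\<^bsub>G\<^esub> z))"
      using S True zero by (subst gr_mult_eq_sum[of ?S]) (simp_all add: gr_add_def)
    moreover have "gr_mult G a c z = (\<Sum>g\<in>?S. a g * c (inv\<^bsub>G\<^esub> g \<otimes>\<^bsub>G\<^esub> z))"
      and "gr_mult G b c z = (\<Sum>g\<in>?S. b g * c (inv\<^bsub>G\<^esub> g \<otimes>\<^bsub>G\<^esub> z))"
      using S True zero by (metis gr_mult_eq_sum)+
    ultimately show ?thesis by (simp add: gr_add_def distrib_right sum.distrib)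
  qed (simp add: gr_add_def gr_mult_outside_carrier)
qed

lemma gr_mult_add_right: "gr_mult G a (gr_add b c) = gr_add (gr_mult G a b) (gr_mult G a c)"
  by (auto simp: gr_mult_def gr_add_def distrib_left sum.distrib)

lemma gr_mult_smult_left:
  assumes "gr_elem G a"
  shows "gr_mult G (gr_smult r a) b = gr_smult r (gr_mult G a b)"
proof
  fix z
  have S: "finite (gr_supp G a)" "gr_supp G a \<subseteq> carrier G"
    using assms by (auto simp: gr_elem_def gr_supp_def)
  have "a w = 0" if "w \<notin> gr_supp G a" for w
    using that gr_elem_zero_outside_supp[OF assms] by auto
  with S show "gr_mult G (gr_smult r a) b z = gr_smult r (gr_mult G a b) z"
    by (cases "z \<in> carrier G")
      (simp_all add: gr_mult_eq_sum[OF S] gr_smult_def sum_distrib_left mult.assoc gr_mult_outside_carrier)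
qed

lemma gr_mult_smult_right: "gr_mult G a (gr_smult r b) = gr_smult r (gr_mult G a b)"
  by (auto simp: gr_mult_def gr_smult_def sum_distrib_left algebra_simps)

lemma gr_mult_basis:
  assumes "group G" "g \<in> carrier G" "h \<in> carrier G"
  shows "gr_mult G (gr_basis g) (gr_basis h) = gr_basis (g \<otimes>\<^bsub>G\<^esub> h)"
proof
  fix z
  have S: "finite {g}" "{g} \<subseteq> carrier G" using assms by auto
  show "gr_mult G (gr_basis g) (gr_basis h) z = gr_basis (g \<otimes>\<^bsub>G\<^esub> h) z"
  proof (cases "z \<in> carrier G")
    case True
    have "gr_mult G (gr_basis g) (gr_basis h) z = gr_basis h (inv\<^bsub>G\<^esub> g \<otimes>\<^bsub>G\<^esub> z)"
      by (subst gr_mult_eq_sum[OF S]) (simp_all add: True gr_basis_def)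
    then show ?thesis using assms True by (simp add: gr_basis_def group.inv_solve_left')
  next
    case False
    then show ?thesis
      using assms group.subgroup_self subgroup.m_closed
      by (fastforce simp: gr_basis_def gr_mult_outside_carrier)
  qed
qed

lemmas gr_mult_expand = gr_mult_add_left gr_mult_add_right gr_mult_smult_left gr_mult_smult_right
  gr_mult_basis gr_elem_add gr_elem_smult gr_elem_basis

lemma gr_mult_binomial_apply:
  assumes "group G" "g1 \<in> carrier G" "g2 \<in> carrier G" "h1 \<in> carrier G" "h2 \<in> carrier G"
  shows "gr_mult G (gr_add (gr_basis g1) (gr_smult c (gr_basis g2)))
      (gr_add (gr_basis h1) (gr_smult d (gr_basis h2))) z =
    gr_basis (g1 \<otimes>\<^bsub>G\<^esub> h1) z + d * gr_basis (g1 \<otimes>\<^bsub>G\<^esub> h2) z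
    + c * gr_basis (g2 \<otimes>\<^bsub>G\<^esub> h1) z + c * d * gr_basis (g2 \<otimes>\<^bsub>G\<^esub> h2) z"
  using assms by (simp add: gr_mult_expand) (simp add: gr_add_def gr_smult_def algebra_simps)

lemma (in group) conj_eq_iff:
  "x \<in> carrier G \<Longrightarrow> y \<in> carrier G \<Longrightarrow> z \<in> carrier G \<Longrightarrow> inv y \<otimes> x \<otimes> y = z \<longleftrightarrow> x \<otimes> y = y \<otimes> z"
  by (simp add: m_assoc inv_solve_left')

locale anticommutative_S = group G for G :: "('g, 'm) monoid_scheme" (structure) +
  fixes star :: "'g \<Rightarrow> 'g" and \<sigma> :: "'g \<Rightarrow> 'r::comm_ring_1"
  assumes CHAR_neq_2: "CHAR('r) \<noteq> 2"
    and involution: "group_involution G star"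
    and unit_hom: "unit_hom G \<sigma>"
    and anticomm: "anticommutative G (S_set G star \<sigma>)"
begin

lemma star_closed [simp]: "x \<in> carrier G \<Longrightarrow> star x \<in> carrier G"
  and star_mult: "x \<in> carrier G \<Longrightarrow> y \<in> carrier G \<Longrightarrow> star (x \<otimes> y) = star y \<otimes> star x"
  and star_star [simp]: "x \<in> carrier G \<Longrightarrow> star (star x) = x"
  using involution by (auto simp: group_involution_def)

lemma sigma_unit: "x \<in> carrier G \<Longrightarrow> \<sigma> x dvd 1"
  and sigma_mult: "x \<in> carrier G \<Longrightarrow> y \<in> carrier G \<Longrightarrow> \<sigma> (x \<otimes> y) = \<sigma> x * \<sigma> y"
  using unit_hom by (auto simp: unit_hom_def)

lemma two_neq_zero: "(2::'r) \<noteq> 0"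
  using CHAR_neq_2 by (rule two_neq_zero_of_CHAR_neq_2)

lemma unit_mult_eq_zero: "x \<in> carrier G \<Longrightarrow> c * \<sigma> x = 0 \<Longrightarrow> c = 0"
  using sigma_unit by (metis dvdE mult.assoc mult_1_right mult_zero_left)

definition sigma_sym :: "'g \<Rightarrow> 'g \<Rightarrow> 'r" where
  "sigma_sym x = gr_add (gr_basis x) (gr_smult (\<sigma> x) (gr_basis (star x)))"

lemma S_gens_in_S_set: "a \<in> S_gens G star \<sigma> \<Longrightarrow> a \<in> S_set G star \<sigma>"
  unfolding S_set_def
  using gr_span.step[OF _ gr_span.zero, of a _ 1] by (simp add: gr_add_def gr_smult_def)

lemma sigma_sym_in_S: "x \<in> carrier G \<Longrightarrow> star x \<noteq> x \<Longrightarrow> sigma_sym x \<in> S_set G star \<sigma>"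
  by (rule S_gens_in_S_set) (auto simp: S_gens_def sigma_sym_def sym_elems_def)

lemma smult_sym_in_S:
  "w \<in> carrier G \<Longrightarrow> star w = w \<Longrightarrow> \<sigma> w \<noteq> 1 \<Longrightarrow> \<alpha> * (1 - \<sigma> w) = 0
    \<Longrightarrow> gr_smult \<alpha> (gr_basis w) \<in> S_set G star \<sigma>"
  by (rule S_gens_in_S_set) (auto simp: S_gens_def sym_elems_def sigma_ker_def)

lemma anticomm_apply:
  "a \<in> S_set G star \<sigma> \<Longrightarrow> b \<in> S_set G star \<sigma> \<Longrightarrow> gr_mult G a b z + gr_mult G b a z = 0"
  using anticomm unfolding anticommutative_def gr_add_def by meson

lemma sigma_sym_mult_apply:
  "x \<in> carrier G \<Longrightarrow> y \<in> carrier G \<Longrightarrow> gr_mult G (sigma_sym x) (sigma_sym y) z =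
    gr_basis (x \<otimes> y) z + \<sigma> y * gr_basis (x \<otimes> star y) z
    + \<sigma> x * gr_basis (star x \<otimes> y) z + \<sigma> x * \<sigma> y * gr_basis (star x \<otimes> star y) z"
  unfolding sigma_sym_def by (simp add: gr_mult_binomial_apply is_group)

lemma sigma_sym_square_apply:
  assumes "x \<in> carrier G" "star x \<noteq> x"
  shows "2 * (gr_basis (x \<otimes> x) z + \<sigma> x * gr_basis (x \<otimes> star x) z
    + \<sigma> x * gr_basis (star x \<otimes> x) z + \<sigma> x * \<sigma> x * gr_basis (star x \<otimes> star x) z) = 0"
  using anticomm_apply[OF sigma_sym_in_S[OF assms] sigma_sym_in_S[OF assms], of z]
  unfolding sigma_sym_mult_apply[OF assms(1) assms(1)] mult_2 .

lemma nonsym_commutes_with_star: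
  assumes "x \<in> carrier G" "star x \<noteq> x"
  shows "x \<otimes> star x = star x \<otimes> x"
proof (rule ccontr)
  assume "x \<otimes> star x \<noteq> star x \<otimes> x"
  then have "2 * \<sigma> x = 0"
    using sigma_sym_square_apply[OF assms, of "x \<otimes> star x"] assms by (simp add: gr_basis_def)
  with assms two_neq_zero show False by (metis unit_mult_eq_zero)
qed

lemma four_eq_zero:
  assumes "x \<in> carrier G" "star x \<noteq> x"
  shows "(4::'r) = 0"
proof -
  have "4 * \<sigma> x = 0"
    using sigma_sym_square_apply[OF assms, of "x \<otimes> star x"] nonsym_commutes_with_star[OF assms] assms
    by (simp add: gr_basis_def)
  with assms show ?thesis by (metis unit_mult_eq_zero)
qed

lemma nonsym_square_eq:
  assumes "x \<in> carrier G" "star x \<noteq> x"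
  shows "x \<otimes> x = star x \<otimes> star x"
proof (rule ccontr)
  assume "x \<otimes> x \<noteq> star x \<otimes> star x"
  then have "(2::'r) = 0"
    using sigma_sym_square_apply[OF assms, of "x \<otimes> x"] assms by (simp add: gr_basis_def)
  with two_neq_zero show False ..
qed

lemma star_swap:
  assumes "x \<in> carrier G" "star x \<noteq> x" "y \<in> carrier G" "x \<otimes> y = star x \<otimes> star y"
  shows "x \<otimes> star y = star x \<otimes> y"
proof -
  have "star x \<otimes> (x \<otimes> star y) = x \<otimes> (star x \<otimes> star y)"
    using nonsym_commutes_with_star[OF assms(1,2)] assms(1,3) by (simp flip: m_assoc)
  also have "\<dots> = x \<otimes> (x \<otimes> y)"
    using assms(4) by simp
  also have "\<dots> = star x \<otimes> (star x \<otimes> y)"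
    using nonsym_square_eq[OF assms(1,2)] assms(1,3) by (simp flip: m_assoc)
  finally show ?thesis using assms(1,3) by simp
qed

lemma nonsym_normalizes_sym:
  assumes "x \<in> carrier G" "star x \<noteq> x" "w \<in> carrier G" "star w = w" "\<sigma> w = -1"
  shows "x \<otimes> w \<in> {w \<otimes> x, w \<otimes> star x}"
proof (rule ccontr)
  assume nc: "x \<otimes> w \<notin> {w \<otimes> x, w \<otimes> star x}"
  have "(-1::'r) \<noteq> 1"
    using two_neq_zero by (metis add_eq_0_iff2 one_add_one)
  moreover have "2 * (1 - \<sigma> w) = 0"
    using four_eq_zero[OF assms(1,2)] assms(5) by simp
  ultimately have "gr_smult 2 (gr_basis w) \<in> S_set G star \<sigma>"
    using assms by (intro smult_sym_in_S) auto
  from anticomm_apply[OF sigma_sym_in_S[OF assms(1,2)] this, of "x \<otimes> w"]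
  have "(2::'r) = 0"
    using assms nc
    by (simp add: sigma_sym_def gr_mult_expand) (simp add: gr_add_def gr_smult_def gr_basis_def)
  with two_neq_zero show False ..
qed

lemma anticomm_coeff_at_mult:
  assumes "x \<in> carrier G" "star x \<noteq> x" "y \<in> carrier G" "star y \<noteq> y"
    and "x \<otimes> y \<notin> {y \<otimes> x, y \<otimes> star x}"
  shows "1 + \<sigma> x * \<sigma> y * gr_basis (star x \<otimes> star y) (x \<otimes> y)
    + \<sigma> y * gr_basis (star y \<otimes> x) (x \<otimes> y) + \<sigma> y * \<sigma> x * gr_basis (star y \<otimes> star x) (x \<otimes> y) = 0"
  using anticomm_apply[OF sigma_sym_in_S[OF assms(1,2)] sigma_sym_in_S[OF assms(3,4)], of "x \<otimes> y"] assms
  by (simp add: sigma_sym_mult_apply gr_basis_def add.assoc split del: if_split)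

lemma mult_ne_star_mult_commuted:
  assumes x: "x \<in> carrier G" "star x \<noteq> x" and y: "y \<in> carrier G" "star y \<noteq> y"
    and "\<sigma> y \<noteq> -1" and nc: "x \<otimes> y \<notin> {y \<otimes> x, y \<otimes> star x}"
  shows "x \<otimes> y \<noteq> star y \<otimes> x"
proof
  assume swap: "x \<otimes> y = star y \<otimes> x"
  note coeff = anticomm_coeff_at_mult[OF x y nc]
  have ne: "x \<otimes> y \<noteq> star y \<otimes> star x"
    using swap x y by simp
  have prod: "x \<otimes> y = star x \<otimes> star y"
  proof (rule ccontr)
    assume "x \<otimes> y \<noteq> star x \<otimes> star y"
    then have "1 + \<sigma> y = 0"
      using coeff swap ne by (simp add: gr_basis_def)
    with \<open>\<sigma> y \<noteq> -1\<close> show False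
      by (metis add.commute eq_neg_iff_add_eq_0)
  qed
  have eq1: "1 + \<sigma> x * \<sigma> y + \<sigma> y = 0"
    using coeff swap ne prod by (simp add: gr_basis_def)
  txt \<open>Applying the involution to \<open>swap\<close> and \<open>prod\<close> shows that \<open>y \<otimes> x\<close> occurs four times
    in \<open>ab + ba\<close>; its coefficient gives a second relation.\<close>
  have yx: "star x \<otimes> y = y \<otimes> x" "star y \<otimes> star x = y \<otimes> x" "x \<otimes> star y = y \<otimes> x"
    using arg_cong[OF swap, of star] arg_cong[OF prod, of star] star_swap[OF x y(1) prod] x y
    by (simp_all add: star_mult)
  have "gr_basis (x \<otimes> y) (y \<otimes> x) + \<sigma> y * gr_basis (y \<otimes> x) (y \<otimes> x)
      + \<sigma> x * gr_basis (y \<otimes> x) (y \<otimes> x) + \<sigma> x * \<sigma> y * gr_basis (x \<otimes> y) (y \<otimes> x)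
      + (gr_basis (y \<otimes> x) (y \<otimes> x) + \<sigma> x * gr_basis (y \<otimes> star x) (y \<otimes> x)
      + \<sigma> y * gr_basis (x \<otimes> y) (y \<otimes> x) + \<sigma> y * \<sigma> x * gr_basis (y \<otimes> x) (y \<otimes> x)) = 0"
    using anticomm_apply[OF sigma_sym_in_S[OF x] sigma_sym_in_S[OF y], of "y \<otimes> x"]
    by (simp only: sigma_sym_mult_apply x(1) y(1) yx prod[symmetric] swap[symmetric])
  then have "1 + \<sigma> x + \<sigma> y + \<sigma> x * \<sigma> y = 0"
    using nc x y by (simp add: gr_basis_def algebra_simps eq_commute[of "y \<otimes> x" "x \<otimes> y"])
  moreover have "\<sigma> x = (1 + \<sigma> x + \<sigma> y + \<sigma> x * \<sigma> y) - (1 + \<sigma> x * \<sigma> y + \<sigma> y)"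
    by (simp add: algebra_simps)
  ultimately have "\<sigma> x = 0"
    using eq1 by simp
  with sigma_unit[OF x(1)] show False
    by simp
qed

theorem sigma_minus_one_if_not_conj:
  assumes x: "x \<in> carrier G" "star x \<noteq> x" and y: "y \<in> carrier G" "star y \<noteq> y"
    and "\<sigma> y \<noteq> -1" and "inv y \<otimes> x \<otimes> y \<notin> {x, star x}"
  shows "\<sigma> (x \<otimes> y) = -1 \<and> x \<otimes> y = star x \<otimes> star y \<and> x \<otimes> star y = star x \<otimes> y"
proof -
  have nc: "x \<otimes> y \<notin> {y \<otimes> x, y \<otimes> star x}"
    using assms by (simp add: conj_eq_iff)
  have "x \<otimes> y \<noteq> star y \<otimes> x"
    using mult_ne_star_mult_commuted[OF x y \<open>\<sigma> y \<noteq> -1\<close> nc] .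
  then have coeff: "1 + \<sigma> x * \<sigma> y * gr_basis (star x \<otimes> star y) (x \<otimes> y)
      + \<sigma> x * \<sigma> y * gr_basis (star y \<otimes> star x) (x \<otimes> y) = 0"
    using anticomm_coeff_at_mult[OF x y nc] by (simp add: gr_basis_def mult.commute)
  have not_sym: "x \<otimes> y \<noteq> star y \<otimes> star x"
  proof
    assume sym: "x \<otimes> y = star y \<otimes> star x"
    have "x \<otimes> y \<noteq> star x \<otimes> star y"
    proof
      assume "x \<otimes> y = star x \<otimes> star y"
      then have "1 + 2 * (\<sigma> x * \<sigma> y) = 0"
        using coeff sym by (simp add: gr_basis_def add.commute)
      moreover have "2 = 2 * (1 + 2 * (\<sigma> x * \<sigma> y)) - 4 * (\<sigma> x * \<sigma> y)"
        by (simp add: algebra_simps)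
      ultimately show False
        using four_eq_zero[OF x] two_neq_zero by simp
    qed
    then have "\<sigma> x * \<sigma> y = -1"
      using coeff sym by (simp add: gr_basis_def eq_neg_iff_add_eq_0 add.commute)
    then have "\<sigma> (x \<otimes> y) = -1"
      using x y by (simp add: sigma_mult)
    moreover have "star (x \<otimes> y) = x \<otimes> y"
      using sym x y by (simp add: star_mult)
    ultimately have "x \<otimes> (x \<otimes> y) \<in> {(x \<otimes> y) \<otimes> x, (x \<otimes> y) \<otimes> star x}"
      using x y by (intro nonsym_normalizes_sym) simp_all
    with nc x y show False
      by (auto simp: m_assoc)
  qed
  then have prod: "x \<otimes> y = star x \<otimes> star y"
    using coeff by (cases "x \<otimes> y = star x \<otimes> star y") (simp_all add: gr_basis_def)
  then have "\<sigma> x * \<sigma> y = -1"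
    using coeff not_sym by (simp add: gr_basis_def eq_neg_iff_add_eq_0 add.commute)
  then have "\<sigma> (x \<otimes> y) = -1"
    using x y by (simp add: sigma_mult)
  with prod star_swap[OF x y(1) prod] show ?thesis
    by blast
qed

end

theorem lemma3p5:
  fixes G :: "('g, 'm) monoid_scheme"
    and star :: "'g \<Rightarrow> 'g"
    and \<sigma> :: "'g \<Rightarrow> 'r::comm_ring_1"
    and x y :: 'g
  assumes "group G"
    and "CHAR('r) \<noteq> 2"
    and "group_involution G star"
    and "unit_hom G \<sigma>"
    and "\<exists>g\<in>carrier G. \<sigma> g \<noteq> 1"
    and "\<forall>g\<in>carrier G. \<sigma> (g \<otimes>\<^bsub>G\<^esub> star g) = 1"
    and "anticommutative G (S_set G star \<sigma>)"
    and "x \<in> carrier G" and "star x \<noteq> x"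
    and "y \<in> carrier G" and "star y \<noteq> y"
    and "\<sigma> y \<noteq> -1"
  shows "inv\<^bsub>G\<^esub> y \<otimes>\<^bsub>G\<^esub> x \<otimes>\<^bsub>G\<^esub> y \<in> {x, star x}
    \<or> (\<sigma> (x \<otimes>\<^bsub>G\<^esub> y) = -1
        \<and> x \<otimes>\<^bsub>G\<^esub> y = star x \<otimes>\<^bsub>G\<^esub> star y
        \<and> x \<otimes>\<^bsub>G\<^esub> star y = star x \<otimes>\<^bsub>G\<^esub> y)"
proof -
  interpret anticommutative_S G star \<sigma>
    using assms(1-4,7) by (simp add: anticommutative_S_def anticommutative_S_axioms_def)
  show ?thesis
    using sigma_minus_one_if_not_conj assms(8-12) by blast
qed

end
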